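(* Let $E$ be a set and $T$ a set of infinitary propositional formulae over $E$, and let $C$ be the set of models of $T$. (a) If every formula of $T$ is a clause $\bigwedge X\Rightarrow\bigvee Y$ with $X\neq\emptyset$, then $(E,C)$ is rooted. (b) If every formula is a clause $\bigwedge X\Rightarrow\bigvee Y$ with $|X|=1$ or $Y=\emptyset$, then $C$ is closed under bounded unions. (c) If every formula is a clause with $|Y|\le1$, then $C$ is closed under nonempty intersections. (d) If every formula has the form $\bigwedge X\Rightarrow\big((\bigvee_{j\in J}\bigwedge Y_j)\wedge\bigwedge_{j,k\in J,j\ne k}\neg(\bigwedge Y_j\wedge\bigwedge Y_k)\big)$ with $X,Y_j\subseteq E$, then $C$ is closed under bounded nonempty intersections. (e) If every formula is a clause with $X$ finite, then $(E,C)$ has finite conflict. (f) If every formula is a clause with $|X|\le 2$, then $(E,C)$ has binary conflict. (g) If every formula is a clause with $|X|=1$, or with $X$ finite and $Y=\emptyset$, then $C$ is closed under finitely consistent unions. (h) If every formula is a clause with $|X|=1$, or with $|X|\le2$ and $Y=\emptyset$, then $C$ is closed under pairwise consistent unions. (i) If every formula has the form $\bigwedge X\Rightarrow\big((\bigvee_{j\in J}\bigwedge Y_j)\wedge\bigwedge_{j,k\in J,j\ne k}\neg(\bigwedge Z_{j,k}\wedge\bigwedge Z_{k,j})\big)$ with $X$ finite, $Y_j\subseteq E$, and each $Z_{j,k}$ a finite subset of $Y_j$, then $C$ is closed under finitely consistent nonempty intersections. (j) If every formula has the form $\big(\bigwedge X\Rightarrow\bigvee_{j\in J}\bigwedge Y_j\big)\wedge\bigwedge_{j,k\in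 J,j\neq k}\neg(e_{j,k}\wedge e_{k,j})$ with $|X|\le2$, $Y_j\subseteq E$ and $e_{j,k}\in Y_j$, then $C$ is closed under pairwise consistent nonempty intersections.
   Context: A model of $T$ is a subset $m\subseteq E$ (the true variables) making every formula of $T$ true; $\bigwedge$, $\bigvee$ may be infinitary. For a configuration structure $(E,C)$ with $C\subseteq\mathcal{P}(E)$: rooted means $\emptyset\in C$; $X$ is consistent if $X\subseteq z$ for some $z\in C$, finitely consistent if all its finite subsets are consistent, pairwise consistent if all its subsets of size $\le 2$ are consistent. Closed under bounded unions: $A\subseteq C$ and $\bigcup A$ consistent imply $\bigcup A\in C$; nonempty intersections: $\emptyset\ne A\subseteq C$ implies $\bigcap A\in C$; bounded nonempty intersections: $\emptyset\neq A\subseteq C$ with $\bigcup A$ consistent implies $\bigcap A\in C$; finitely (pairwise) consistent unions: $A\subseteq C$ with $\bigcup A$ finitely (pairwise) consistent implies $\bigcup A\in C$; finitely (pairwise) consistent nonempty intersections: $\emptyset\neq A\subseteq C$ with $\bigcup A$ finitely (pairwise) consistent implies $\bigcap A\in C$. $(E,C)$ has finite conflict if every $X\subseteq E$ such that every finite $Y\subseteq X$ satisfies $Y\subseteq z\subseteq X$ for some $z\in C$ lies in $C$; binary conflict: same with "$|Y|\le2$" in place of "finite". *)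

theory Defs
  imports Main
begin

text \<open>A formula over variables of type 'a is identified with its truth function on
  valuations, a valuation being the set of true variables.\<close>

type_synonym 'a form = "'a set \<Rightarrow> bool"

definition fvar :: "'a \<Rightarrow> 'a form" where "fvar e = (\<lambda>m. e \<in> m)"
definition fneg :: "'a form \<Rightarrow> 'a form" where "fneg \<phi> = (\<lambda>m. \<not> \<phi> m)"
definition fconj :: "'a form \<Rightarrow> 'a form \<Rightarrow> 'a form" where "fconj \<phi> \<psi> = (\<lambda>m. \<phi> m \<and> \<psi> m)"
definition fimp :: "'a form \<Rightarrow> 'a form \<Rightarrow> 'a form" where "fimp \<phi> \<psi> = (\<lambda>m. \<phi> m \<longrightarrow> \<psi> m)"
definition BigConj :: "'a form set \<Rightarrow> 'a form" where "BigConj S = (\<lambda>m. \<forall>\<phi>\<in>S. \<phi> m)"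
definition BigDisj :: "'a form set \<Rightarrow> 'a form" where "BigDisj S = (\<lambda>m. \<exists>\<phi>\<in>S. \<phi> m)"

definition models :: "'a set \<Rightarrow> 'a form set \<Rightarrow> 'a set set" where
  "models E T = {m. m \<subseteq> E \<and> (\<forall>\<phi>\<in>T. \<phi> m)}"

definition clause :: "'a set \<Rightarrow> 'a set \<Rightarrow> 'a form" where
  "clause X Y = fimp (BigConj (fvar ` X)) (BigDisj (fvar ` Y))"

definition clause_with :: "'a set \<Rightarrow> ('a set \<Rightarrow> 'a set \<Rightarrow> bool) \<Rightarrow> 'a form \<Rightarrow> bool" where
  "clause_with E P \<phi> = (\<exists>X Y. X \<subseteq> E \<and> Y \<subseteq> E \<and> P X Y \<and> \<phi> = clause X Y)"

definition form_d :: "'a set \<Rightarrow> 'j set \<Rightarrow> ('j \<Rightarrow> 'a set) \<Rightarrow> 'a form" where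
  "form_d X J Y = fimp (BigConj (fvar ` X))
     (fconj (BigDisj ((\<lambda>j. BigConj (fvar ` Y j)) ` J))
            (BigConj {fneg (fconj (BigConj (fvar ` Y j)) (BigConj (fvar ` Y k))) | j k.
                        j \<in> J \<and> k \<in> J \<and> j \<noteq> k}))"

definition form_i :: "'a set \<Rightarrow> 'j set \<Rightarrow> ('j \<Rightarrow> 'a set) \<Rightarrow> ('j \<Rightarrow> 'j \<Rightarrow> 'a set) \<Rightarrow> 'a form" where
  "form_i X J Y Z = fimp (BigConj (fvar ` X))
     (fconj (BigDisj ((\<lambda>j. BigConj (fvar ` Y j)) ` J))
            (BigConj {fneg (fconj (BigConj (fvar ` Z j k)) (BigConj (fvar ` Z k j))) | j k.
                        j \<in> J \<and> k \<in> J \<and> j \<noteq> k}))"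

definition form_j :: "'a set \<Rightarrow> 'j set \<Rightarrow> ('j \<Rightarrow> 'a set) \<Rightarrow> ('j \<Rightarrow> 'j \<Rightarrow> 'a) \<Rightarrow> 'a form" where
  "form_j X J Y e = fconj (fimp (BigConj (fvar ` X)) (BigDisj ((\<lambda>j. BigConj (fvar ` Y j)) ` J)))
            (BigConj {fneg (fconj (fvar (e j k)) (fvar (e k j))) | j k.
                        j \<in> J \<and> k \<in> J \<and> j \<noteq> k})"

definition rooted :: "'a set set \<Rightarrow> bool" where "rooted C = ({} \<in> C)"

definition consistent :: "'a set set \<Rightarrow> 'a set \<Rightarrow> bool" where
  "consistent C X = (\<exists>z\<in>C. X \<subseteq> z)"

definition fin_consistent :: "'a set set \<Rightarrow> 'a set \<Rightarrow> bool" where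
  "fin_consistent C X = (\<forall>Y. Y \<subseteq> X \<and> finite Y \<longrightarrow> consistent C Y)"

definition pw_consistent :: "'a set set \<Rightarrow> 'a set \<Rightarrow> bool" where
  "pw_consistent C X = (\<forall>Y. Y \<subseteq> X \<and> finite Y \<and> card Y \<le> 2 \<longrightarrow> consistent C Y)"

definition closed_bounded_unions :: "'a set set \<Rightarrow> bool" where
  "closed_bounded_unions C = (\<forall>A. A \<subseteq> C \<and> consistent C (\<Union>A) \<longrightarrow> \<Union>A \<in> C)"

definition closed_nonempty_inters :: "'a set set \<Rightarrow> bool" where
  "closed_nonempty_inters C = (\<forall>A. A \<noteq> {} \<and> A \<subseteq> C \<longrightarrow> \<Inter>A \<in> C)"

definition closed_bounded_nonempty_inters :: "'a set set \<Rightarrow> bool" where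
  "closed_bounded_nonempty_inters C =
     (\<forall>A. A \<noteq> {} \<and> A \<subseteq> C \<and> consistent C (\<Union>A) \<longrightarrow> \<Inter>A \<in> C)"

definition closed_fin_consistent_unions :: "'a set set \<Rightarrow> bool" where
  "closed_fin_consistent_unions C = (\<forall>A. A \<subseteq> C \<and> fin_consistent C (\<Union>A) \<longrightarrow> \<Union>A \<in> C)"

definition closed_pw_consistent_unions :: "'a set set \<Rightarrow> bool" where
  "closed_pw_consistent_unions C = (\<forall>A. A \<subseteq> C \<and> pw_consistent C (\<Union>A) \<longrightarrow> \<Union>A \<in> C)"

definition closed_fin_consistent_nonempty_inters :: "'a set set \<Rightarrow> bool" where
  "closed_fin_consistent_nonempty_inters C =
     (\<forall>A. A \<noteq> {} \<and> A \<subseteq> C \<and> fin_consistent C (\<Union>A) \<longrightarrow> \<Inter>A \<in> C)"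

definition closed_pw_consistent_nonempty_inters :: "'a set set \<Rightarrow> bool" where
  "closed_pw_consistent_nonempty_inters C =
     (\<forall>A. A \<noteq> {} \<and> A \<subseteq> C \<and> pw_consistent C (\<Union>A) \<longrightarrow> \<Inter>A \<in> C)"

definition finite_conflict :: "'a set \<Rightarrow> 'a set set \<Rightarrow> bool" where
  "finite_conflict E C = (\<forall>X. X \<subseteq> E \<and>
      (\<forall>Y. Y \<subseteq> X \<and> finite Y \<longrightarrow> (\<exists>z\<in>C. Y \<subseteq> z \<and> z \<subseteq> X)) \<longrightarrow> X \<in> C)"

definition binary_conflict :: "'a set \<Rightarrow> 'a set set \<Rightarrow> bool" where
  "binary_conflict E C = (\<forall>X. X \<subseteq> E \<and>
      (\<forall>Y. Y \<subseteq> X \<and> finite Y \<and> card Y \<le> 2 \<longrightarrow> (\<exists>z\<in>C. Y \<subseteq> z \<and> z \<subseteq> X)) \<longrightarrow> X \<in> C)"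

end

theory Submission
  imports Defs
begin

text \<open>Each syntactic restriction on T makes every single formula true in the set built from
  models, provided the consistency hypothesis supplies a model z containing the few variables
  the formula can look at. A clause with one premise is true in a union of models; a clause
  without conclusion is false only on supersets of its premise, which no model contains; a
  clause with at most one conclusion is true in an intersection of models. For the
  disjunctions of conjunctions in (d), (i), (j), each member of A satisfies some disjunct
  Y j, and the exclusion constraints, evaluated in z, force all members to pick the same j,
  so Y j is contained in the intersection.\<close>

lemma clause_eval [simp]: "clause X Y m = (X \<subseteq> m \<longrightarrow> (\<exists>y\<in>Y. y \<in> m))"
  unfolding clause_def fimp_def BigConj_def BigDisj_def fvar_def by auto

lemma BigConj_fvar_image: "BigConj (fvar ` S) m = (S \<subseteq> m)"
  unfolding BigConj_def fvar_def by blast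

lemma BigConj_pairs: "BigConj {f j k | j k. P j k} m = (\<forall>j k. P j k \<longrightarrow> f j k m)"
  unfolding BigConj_def by blast

lemma BigDisj_image: "BigDisj (g ` J) m = (\<exists>j\<in>J. g j m)"
  unfolding BigDisj_def by blast

lemmas form_eval_defs = fimp_def fconj_def fneg_def fvar_def
  BigConj_pairs BigConj_fvar_image BigDisj_image

lemma form_d_eval [simp]: "form_d X J Y m = (X \<subseteq> m \<longrightarrow> (\<exists>j\<in>J. Y j \<subseteq> m) \<and>
   (\<forall>j\<in>J. \<forall>k\<in>J. j \<noteq> k \<longrightarrow> \<not> (Y j \<subseteq> m \<and> Y k \<subseteq> m)))"
  unfolding form_d_def form_eval_defs by auto

lemma form_i_eval [simp]: "form_i X J Y Z m = (X \<subseteq> m \<longrightarrow> (\<exists>j\<in>J. Y j \<subseteq> m) \<and>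
   (\<forall>j\<in>J. \<forall>k\<in>J. j \<noteq> k \<longrightarrow> \<not> (Z j k \<subseteq> m \<and> Z k j \<subseteq> m)))"
  unfolding form_i_def form_eval_defs by auto

lemma form_j_eval [simp]: "form_j X J Y e m = ((X \<subseteq> m \<longrightarrow> (\<exists>j\<in>J. Y j \<subseteq> m)) \<and>
   (\<forall>j\<in>J. \<forall>k\<in>J. j \<noteq> k \<longrightarrow> \<not> (e j k \<in> m \<and> e k j \<in> m)))"
  unfolding form_j_def form_eval_defs by auto

lemma mem_models_iff: "m \<in> models E T \<longleftrightarrow> m \<subseteq> E \<and> (\<forall>\<phi>\<in>T. \<phi> m)"
  unfolding models_def by blast

lemma clause_withE:
  assumes "\<forall>\<phi>\<in>T. clause_with E P \<phi>" "\<phi> \<in> T"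
  obtains X Y where "P X Y" "\<phi> = clause X Y"
  using assms unfolding clause_with_def by blast

lemma consistent_subset: "consistent C X \<Longrightarrow> Y \<subseteq> X \<Longrightarrow> consistent C Y"
  unfolding consistent_def by blast

lemma clause_Union_singleton: "\<forall>a\<in>A. clause {x} Y a \<Longrightarrow> clause {x} Y (\<Union>A)"
  by auto

lemma clause_Inter:
  assumes "finite Y" "card Y \<le> 1" "A \<noteq> {}" "\<forall>a\<in>A. clause X Y a"
  shows "clause X Y (\<Inter>A)"
proof -
  obtain a0 where "a0 \<in> A" using assms(3) by blast
  have "Y = {} \<or> (\<exists>y. Y = {y})"
    using assms(1,2) by (metis card_0_eq card_1_singletonE le_Suc_eq One_nat_def le_zero_eq)
  then show ?thesis
  proof
    assume "Y = {}"
    then show ?thesis using \<open>a0 \<in> A\<close> assms(4) by auto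
  next
    assume "\<exists>y. Y = {y}"
    then show ?thesis using assms(4) by auto
  qed
qed

lemma clause_upward: "X \<subseteq> z \<Longrightarrow> z \<subseteq> W \<Longrightarrow> clause X Y z \<Longrightarrow> clause X Y W"
  by auto

lemma ex_choice_subset_Inter:
  assumes "a0 \<in> A" and choice: "\<forall>a\<in>A. \<exists>j\<in>J. Y j \<subseteq> a"
    and unique: "\<And>a a' j k. a \<in> A \<Longrightarrow> a' \<in> A \<Longrightarrow> j \<in> J \<Longrightarrow> k \<in> J \<Longrightarrow>
        Y j \<subseteq> a \<Longrightarrow> Y k \<subseteq> a' \<Longrightarrow> j = k"
  shows "\<exists>j\<in>J. Y j \<subseteq> \<Inter>A"
proof -
  obtain j0 where j0: "j0 \<in> J" "Y j0 \<subseteq> a0"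
    using choice assms(1) by blast
  have "Y j0 \<subseteq> a" if "a \<in> A" for a
  proof -
    obtain j where "j \<in> J" "Y j \<subseteq> a"
      using choice \<open>a \<in> A\<close> by blast
    with unique[OF \<open>a \<in> A\<close> assms(1) _ j0(1) _ j0(2)] show ?thesis by blast
  qed
  with j0(1) show ?thesis by blast
qed

lemma form_d_Inter:
  assumes "A \<noteq> {}" and in_A: "\<forall>a\<in>A. form_d X J Y a"
    and z: "form_d X J Y z" "\<Union>A \<subseteq> z"
  shows "form_d X J Y (\<Inter>A)"
proof (unfold form_d_eval, intro impI conjI)
  obtain a0 where a0: "a0 \<in> A" using assms(1) by blast
  assume X: "X \<subseteq> \<Inter>A"
  have X_sub: "X \<subseteq> a" if "a \<in> A" for a using X that by blast
  have choice: "\<forall>a\<in>A. \<exists>j\<in>J. Y j \<subseteq> a"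
    using in_A X_sub by simp
  have separated: "\<forall>j\<in>J. \<forall>k\<in>J. j \<noteq> k \<longrightarrow> \<not> (Y j \<subseteq> a0 \<and> Y k \<subseteq> a0)"
    using in_A[rule_format, OF a0] X_sub[OF a0] by simp
  have "X \<subseteq> z" using X a0 z(2) by blast
  then have unique_z: "\<forall>j\<in>J. \<forall>k\<in>J. Y j \<subseteq> z \<longrightarrow> Y k \<subseteq> z \<longrightarrow> j = k"
    using z(1) by auto
  show "\<exists>j\<in>J. Y j \<subseteq> \<Inter>A"
    using a0 choice
  proof (rule ex_choice_subset_Inter)
    fix a a' j k assume "a \<in> A" "a' \<in> A" "j \<in> J" "k \<in> J" "Y j \<subseteq> a" "Y k \<subseteq> a'"
    then show "j = k" using unique_z z(2) by blast
  qed
  show "\<forall>j\<in>J. \<forall>k\<in>J. j \<noteq> k \<longrightarrow> \<not> (Y j \<subseteq> \<Inter>A \<and> Y k \<subseteq> \<Inter>A)"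
    using separated Inter_lower[OF a0] by blast
qed

lemma form_i_Inter:
  assumes "A \<noteq> {}" and in_A: "\<forall>a\<in>A. form_i X J Y Z a" and "finite X"
    and Z: "\<forall>j\<in>J. \<forall>k\<in>J. j \<noteq> k \<longrightarrow> finite (Z j k) \<and> Z j k \<subseteq> Y j"
    and witness: "\<And>F. F \<subseteq> \<Union>A \<Longrightarrow> finite F \<Longrightarrow> \<exists>z. F \<subseteq> z \<and> form_i X J Y Z z"
  shows "form_i X J Y Z (\<Inter>A)"
proof (unfold form_i_eval, intro impI conjI)
  obtain a0 where a0: "a0 \<in> A" using assms(1) by blast
  assume X: "X \<subseteq> \<Inter>A"
  have X_sub: "X \<subseteq> a" if "a \<in> A" for a using X that by blast
  have choice: "\<forall>a\<in>A. \<exists>j\<in>J. Y j \<subseteq> a"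
    using in_A X_sub by simp
  have separated: "\<forall>j\<in>J. \<forall>k\<in>J. j \<noteq> k \<longrightarrow> \<not> (Z j k \<subseteq> a0 \<and> Z k j \<subseteq> a0)"
    using in_A[rule_format, OF a0] X_sub[OF a0] by simp
  show "\<exists>j\<in>J. Y j \<subseteq> \<Inter>A"
    using a0 choice
  proof (rule ex_choice_subset_Inter)
    fix a a' j k assume "a \<in> A" "a' \<in> A" "j \<in> J" "k \<in> J" "Y j \<subseteq> a" "Y k \<subseteq> a'"
    show "j = k"
    proof (rule ccontr)
      assume "j \<noteq> k"
      let ?F = "X \<union> Z j k \<union> Z k j"
      have Z_jk: "finite (Z j k)" "Z j k \<subseteq> Y j" "finite (Z k j)" "Z k j \<subseteq> Y k"
        using Z \<open>j \<in> J\<close> \<open>k \<in> J\<close> \<open>j \<noteq> k\<close> by auto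
      have "?F \<subseteq> a \<union> a'"
        using X_sub[OF \<open>a \<in> A\<close>] Z_jk \<open>Y j \<subseteq> a\<close> \<open>Y k \<subseteq> a'\<close> by blast
      also have "\<dots> \<subseteq> \<Union>A"
        using \<open>a \<in> A\<close> \<open>a' \<in> A\<close> by blast
      finally have F: "?F \<subseteq> \<Union>A" "finite ?F"
        using Z_jk \<open>finite X\<close> by simp_all
      obtain z where "?F \<subseteq> z" "form_i X J Y Z z"
        using witness[OF F] by blast
      then show False
        using \<open>j \<in> J\<close> \<open>k \<in> J\<close> \<open>j \<noteq> k\<close> by auto
    qed
  qed
  show "\<forall>j\<in>J. \<forall>k\<in>J. j \<noteq> k \<longrightarrow> \<not> (Z j k \<subseteq> \<Inter>A \<and> Z k j \<subseteq> \<Inter>A)"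
    using separated Inter_lower[OF a0] by blast
qed

text \<open>Unlike in (i), no finiteness of X is needed:
  the exclusion constraints of form_j do not depend on the premise, so only the pair
  e j k, e k j has to be consistent.\<close>

lemma form_j_Inter:
  assumes "A \<noteq> {}" and in_A: "\<forall>a\<in>A. form_j X J Y e a"
    and e: "\<forall>j\<in>J. \<forall>k\<in>J. j \<noteq> k \<longrightarrow> e j k \<in> Y j"
    and witness: "\<And>x y. {x, y} \<subseteq> \<Union>A \<Longrightarrow> \<exists>z. {x, y} \<subseteq> z \<and> form_j X J Y e z"
  shows "form_j X J Y e (\<Inter>A)"
proof -
  obtain a0 where a0: "a0 \<in> A" using assms(1) by blast
  have "\<exists>j\<in>J. Y j \<subseteq> \<Inter>A" if X: "X \<subseteq> \<Inter>A"
  proof -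
    have X_sub: "X \<subseteq> a" if "a \<in> A" for a using X that by blast
    have choice: "\<forall>a\<in>A. \<exists>j\<in>J. Y j \<subseteq> a"
      using in_A X_sub by simp
    show ?thesis
      using a0 choice
    proof (rule ex_choice_subset_Inter)
      fix a a' j k assume "a \<in> A" "a' \<in> A" "j \<in> J" "k \<in> J" "Y j \<subseteq> a" "Y k \<subseteq> a'"
      show "j = k"
      proof (rule ccontr)
        assume "j \<noteq> k"
        then have "e j k \<in> Y j" "e k j \<in> Y k"
          using e \<open>j \<in> J\<close> \<open>k \<in> J\<close> by auto
        then have pair: "{e j k, e k j} \<subseteq> \<Union>A"
          using \<open>a \<in> A\<close> \<open>a' \<in> A\<close> \<open>Y j \<subseteq> a\<close> \<open>Y k \<subseteq> a'\<close> by blast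
        obtain z where "{e j k, e k j} \<subseteq> z" "form_j X J Y e z"
          using witness[OF pair] by blast
        then show False
          using \<open>j \<in> J\<close> \<open>k \<in> J\<close> \<open>j \<noteq> k\<close> by auto
      qed
    qed
  qed
  moreover have "\<forall>j\<in>J. \<forall>k\<in>J. j \<noteq> k \<longrightarrow> \<not> (e j k \<in> a0 \<and> e k j \<in> a0)"
    using in_A a0 by simp
  then have "\<forall>j\<in>J. \<forall>k\<in>J. j \<noteq> k \<longrightarrow> \<not> (e j k \<in> \<Inter>A \<and> e k j \<in> \<Inter>A)"
    using a0 by blast
  ultimately show ?thesis
    by simp
qed

lemma Union_mem_models:
  "A \<subseteq> models E T \<Longrightarrow> (\<And>\<phi>. \<phi> \<in> T \<Longrightarrow> \<phi> (\<Union>A)) \<Longrightarrow> \<Union>A \<in> models E T"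
  unfolding models_def by blast

lemma Inter_mem_models:
  "A \<noteq> {} \<Longrightarrow> A \<subseteq> models E T \<Longrightarrow> (\<And>\<phi>. \<phi> \<in> T \<Longrightarrow> \<phi> (\<Inter>A)) \<Longrightarrow> \<Inter>A \<in> models E T"
  unfolding models_def by blast

lemma models_rooted:
  assumes "\<forall>\<phi>\<in>T. clause_with E (\<lambda>X Y. X \<noteq> {}) \<phi>"
  shows "rooted (models E T)"
  unfolding rooted_def mem_models_iff
proof (intro conjI ballI)
  fix \<phi> assume "\<phi> \<in> T"
  obtain X Y where "X \<noteq> {}" "\<phi> = clause X Y"
    by (rule clause_withE[OF assms \<open>\<phi> \<in> T\<close>])
  then show "\<phi> {}" by simp
qed simp

lemma Union_mem_models_clauses:
  assumes T: "\<forall>\<phi>\<in>T. clause_with E P \<phi>"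
    and P: "\<And>X Y. P X Y \<Longrightarrow> card X = 1 \<or> (Q X \<and> Y = {})"
    and A: "A \<subseteq> models E T"
    and small_consistent: "\<And>X. X \<subseteq> \<Union>A \<Longrightarrow> Q X \<Longrightarrow> consistent (models E T) X"
  shows "\<Union>A \<in> models E T"
proof (rule Union_mem_models[OF A])
  fix \<phi> assume "\<phi> \<in> T"
  obtain X Y where "P X Y" and \<phi>: "\<phi> = clause X Y"
    by (rule clause_withE[OF T \<open>\<phi> \<in> T\<close>])
  from P[OF \<open>P X Y\<close>] have XY: "card X = 1 \<or> (Q X \<and> Y = {})" .
  have true_in_models: "clause X Y z" if "z \<in> models E T" for z
    using that \<open>\<phi> \<in> T\<close> unfolding \<phi> mem_models_iff by blast
  show "\<phi> (\<Union>A)"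
  proof (cases "card X = 1")
    case True
    then obtain x where x: "X = {x}" by (rule card_1_singletonE)
    have "\<forall>a\<in>A. clause {x} Y a"
      using A true_in_models unfolding x by blast
    then show ?thesis
      unfolding \<phi> x by (rule clause_Union_singleton)
  next
    case False
    then have "Q X" "Y = {}" using XY by auto
    have "\<not> X \<subseteq> \<Union>A"
    proof
      assume "X \<subseteq> \<Union>A"
      then obtain z where "z \<in> models E T" "X \<subseteq> z"
        using small_consistent[OF _ \<open>Q X\<close>] unfolding consistent_def by meson
      then show False
        using true_in_models \<open>Y = {}\<close> by auto
    qed
    then show ?thesis
      unfolding \<phi> by simp
  qed
qed

lemma models_closed_bounded_unions:
  assumes "\<forall>\<phi>\<in>T. clause_with E (\<lambda>X Y. card X = 1 \<or> Y = {}) \<phi>"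
  shows "closed_bounded_unions (models E T)"
  unfolding closed_bounded_unions_def
proof (intro allI impI)
  fix A assume "A \<subseteq> models E T \<and> consistent (models E T) (\<Union>A)"
  then show "\<Union>A \<in> models E T"
    using Union_mem_models_clauses[OF assms, where Q = "\<lambda>_. True"] consistent_subset by blast
qed

lemma models_closed_fin_consistent_unions:
  assumes "\<forall>\<phi>\<in>T. clause_with E (\<lambda>X Y. card X = 1 \<or> (finite X \<and> Y = {})) \<phi>"
  shows "closed_fin_consistent_unions (models E T)"
  unfolding closed_fin_consistent_unions_def
proof (intro allI impI)
  fix A assume "A \<subseteq> models E T \<and> fin_consistent (models E T) (\<Union>A)"
  then show "\<Union>A \<in> models E T"
    using Union_mem_models_clauses[OF assms, where Q = finite]
    unfolding fin_consistent_def by blast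
qed

lemma models_closed_pw_consistent_unions:
  assumes "\<forall>\<phi>\<in>T. clause_with E (\<lambda>X Y. card X = 1 \<or> (finite X \<and> card X \<le> 2 \<and> Y = {})) \<phi>"
  shows "closed_pw_consistent_unions (models E T)"
  unfolding closed_pw_consistent_unions_def
proof (intro allI impI)
  fix A assume "A \<subseteq> models E T \<and> pw_consistent (models E T) (\<Union>A)"
  then show "\<Union>A \<in> models E T"
    using Union_mem_models_clauses[OF assms, where Q = "\<lambda>X. finite X \<and> card X \<le> 2"]
    unfolding pw_consistent_def by blast
qed

lemma mem_models_if_premises_witnessed:
  assumes T: "\<forall>\<phi>\<in>T. clause_with E (\<lambda>X Y. Q X) \<phi>" and "W \<subseteq> E"
    and witness: "\<And>X. X \<subseteq> W \<Longrightarrow> Q X \<Longrightarrow> \<exists>z\<in>models E T. X \<subseteq> z \<and> z \<subseteq> W"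
  shows "W \<in> models E T"
  unfolding mem_models_iff
proof (intro conjI ballI)
  fix \<phi> assume "\<phi> \<in> T"
  obtain X Y where "Q X" and \<phi>: "\<phi> = clause X Y"
    by (rule clause_withE[OF T \<open>\<phi> \<in> T\<close>])
  have true_in_models: "clause X Y z" if "z \<in> models E T" for z
    using that \<open>\<phi> \<in> T\<close> unfolding \<phi> mem_models_iff by blast
  show "\<phi> W"
  proof (cases "X \<subseteq> W")
    case True
    then obtain z where "z \<in> models E T" "X \<subseteq> z" "z \<subseteq> W"
      using witness \<open>Q X\<close> by blast
    then show ?thesis
      unfolding \<phi> using true_in_models by (blast intro: clause_upward)
  qed (simp add: \<phi>)
qed (rule \<open>W \<subseteq> E\<close>)

lemma models_finite_conflict:
  assumes "\<forall>\<phi>\<in>T. clause_with E (\<lambda>X Y. finite X) \<phi>"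
  shows "finite_conflict E (models E T)"
  unfolding finite_conflict_def
proof (intro allI impI)
  fix W assume "W \<subseteq> E \<and> (\<forall>Y. Y \<subseteq> W \<and> finite Y \<longrightarrow> (\<exists>z\<in>models E T. Y \<subseteq> z \<and> z \<subseteq> W))"
  then show "W \<in> models E T"
    by (intro mem_models_if_premises_witnessed[OF assms]) simp_all
qed

lemma models_binary_conflict:
  assumes "\<forall>\<phi>\<in>T. clause_with E (\<lambda>X Y. finite X \<and> card X \<le> 2) \<phi>"
  shows "binary_conflict E (models E T)"
  unfolding binary_conflict_def
proof (intro allI impI)
  fix W assume "W \<subseteq> E \<and> (\<forall>Y. Y \<subseteq> W \<and> finite Y \<and> card Y \<le> 2 \<longrightarrow> (\<exists>z\<in>models E T. Y \<subseteq> z \<and> z \<subseteq> W))"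
  then show "W \<in> models E T"
    by (intro mem_models_if_premises_witnessed[OF assms]) simp_all
qed

lemma models_closed_nonempty_inters:
  assumes "\<forall>\<phi>\<in>T. clause_with E (\<lambda>X Y. finite Y \<and> card Y \<le> 1) \<phi>"
  shows "closed_nonempty_inters (models E T)"
  unfolding closed_nonempty_inters_def
proof (intro allI impI)
  fix A assume A: "A \<noteq> {} \<and> A \<subseteq> models E T"
  show "\<Inter>A \<in> models E T"
  proof (rule Inter_mem_models)
    fix \<phi> assume "\<phi> \<in> T"
    obtain X Y where Y: "finite Y \<and> card Y \<le> 1" and \<phi>: "\<phi> = clause X Y"
      by (rule clause_withE[OF assms \<open>\<phi> \<in> T\<close>])
    have "\<forall>a\<in>A. clause X Y a"
      using A \<open>\<phi> \<in> T\<close> unfolding \<phi> models_def by blast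
    with Y A show "\<phi> (\<Inter>A)"
      unfolding \<phi> by (intro clause_Inter) simp_all
  qed (use A in auto)
qed

lemma models_closed_bounded_nonempty_inters:
  assumes "\<forall>\<phi>\<in>T. \<exists>X (J :: 'j set) Y. X \<subseteq> E \<and> (\<forall>j\<in>J. Y j \<subseteq> E) \<and> \<phi> = form_d X J Y"
  shows "closed_bounded_nonempty_inters (models E T)"
  unfolding closed_bounded_nonempty_inters_def
proof (intro allI impI)
  fix A assume A: "A \<noteq> {} \<and> A \<subseteq> models E T \<and> consistent (models E T) (\<Union>A)"
  then obtain z where z: "z \<in> models E T" "\<Union>A \<subseteq> z"
    unfolding consistent_def by blast
  show "\<Inter>A \<in> models E T"
  proof (rule Inter_mem_models)
    fix \<phi> assume "\<phi> \<in> T"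
    then obtain X and J :: "'j set" and Y where \<phi>: "\<phi> = form_d X J Y"
      using assms by blast
    have true_in_models: "form_d X J Y m" if "m \<in> models E T" for m
      using that \<open>\<phi> \<in> T\<close> unfolding \<phi> mem_models_iff by blast
    have "A \<noteq> {}" "\<forall>a\<in>A. form_d X J Y a"
      using A true_in_models by blast+
    then show "\<phi> (\<Inter>A)"
      unfolding \<phi> using true_in_models[OF z(1)] z(2) by (rule form_d_Inter)
  qed (use A in auto)
qed

lemma models_closed_fin_consistent_nonempty_inters:
  assumes "\<forall>\<phi>\<in>T. \<exists>X (J :: 'k set) Y Z. X \<subseteq> E \<and> finite X \<and> (\<forall>j\<in>J. Y j \<subseteq> E)
          \<and> (\<forall>j\<in>J. \<forall>k\<in>J. j \<noteq> k \<longrightarrow> finite (Z j k) \<and> Z j k \<subseteq> Y j) \<and> \<phi> = form_i X J Y Z"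
  shows "closed_fin_consistent_nonempty_inters (models E T)"
  unfolding closed_fin_consistent_nonempty_inters_def
proof (intro allI impI)
  fix A assume A: "A \<noteq> {} \<and> A \<subseteq> models E T \<and> fin_consistent (models E T) (\<Union>A)"
  show "\<Inter>A \<in> models E T"
  proof (rule Inter_mem_models)
    fix \<phi> assume "\<phi> \<in> T"
    obtain X and J :: "'k set" and Y Z where "finite X"
      and Z: "\<forall>j\<in>J. \<forall>k\<in>J. j \<noteq> k \<longrightarrow> finite (Z j k) \<and> Z j k \<subseteq> Y j"
      and \<phi>: "\<phi> = form_i X J Y Z"
      using bspec[OF assms \<open>\<phi> \<in> T\<close>] by blast
    have true_in_models: "form_i X J Y Z z" if "z \<in> models E T" for z
      using that \<open>\<phi> \<in> T\<close> unfolding \<phi> mem_models_iff by blast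
    have witness: "\<exists>z. F \<subseteq> z \<and> form_i X J Y Z z" if "F \<subseteq> \<Union>A" "finite F" for F
    proof -
      have "consistent (models E T) F"
        using A that unfolding fin_consistent_def by blast
      then obtain z where "z \<in> models E T" "F \<subseteq> z"
        unfolding consistent_def by blast
      then show ?thesis
        using true_in_models by blast
    qed
    have "A \<noteq> {}" "\<forall>a\<in>A. form_i X J Y Z a"
      using A true_in_models by blast+
    then show "\<phi> (\<Inter>A)"
      unfolding \<phi> using \<open>finite X\<close> Z witness by (rule form_i_Inter)
  qed (use A in auto)
qed

lemma models_closed_pw_consistent_nonempty_inters:
  assumes "\<forall>\<phi>\<in>T. \<exists>X (J :: 'l set) Y e. X \<subseteq> E \<and> finite X \<and> card X \<le> 2 \<and> (\<forall>j\<in>J. Y j \<subseteq> E)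
          \<and> (\<forall>j\<in>J. \<forall>k\<in>J. j \<noteq> k \<longrightarrow> e j k \<in> Y j) \<and> \<phi> = form_j X J Y e"
  shows "closed_pw_consistent_nonempty_inters (models E T)"
  unfolding closed_pw_consistent_nonempty_inters_def
proof (intro allI impI)
  fix A assume A: "A \<noteq> {} \<and> A \<subseteq> models E T \<and> pw_consistent (models E T) (\<Union>A)"
  show "\<Inter>A \<in> models E T"
  proof (rule Inter_mem_models)
    fix \<phi> assume "\<phi> \<in> T"
    obtain X and J :: "'l set" and Y e where e: "\<forall>j\<in>J. \<forall>k\<in>J. j \<noteq> k \<longrightarrow> e j k \<in> Y j"
      and \<phi>: "\<phi> = form_j X J Y e"
      using bspec[OF assms \<open>\<phi> \<in> T\<close>] by blast
    have true_in_models: "form_j X J Y e z" if "z \<in> models E T" for z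
      using that \<open>\<phi> \<in> T\<close> unfolding \<phi> mem_models_iff by blast
    have witness: "\<exists>z. {x, y} \<subseteq> z \<and> form_j X J Y e z" if "{x, y} \<subseteq> \<Union>A" for x y
    proof -
      have "card {x, y} \<le> 2"
        by (simp add: card_insert_if)
      then have "consistent (models E T) {x, y}"
        using A that unfolding pw_consistent_def by blast
      then obtain z where "z \<in> models E T" "{x, y} \<subseteq> z"
        unfolding consistent_def by blast
      then show ?thesis
        using true_in_models by blast
    qed
    have "A \<noteq> {}" "\<forall>a\<in>A. form_j X J Y e a"
      using A true_in_models by blast+
    then show "\<phi> (\<Inter>A)"
      unfolding \<phi> using e witness by (rule form_j_Inter)
  qed (use A in auto)
qed

theorem mainTheorem13:
  fixes E :: "'a set" and T :: "'a form set"
  defines "C \<equiv> models E T"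
  shows
   "((\<forall>\<phi>\<in>T. clause_with E (\<lambda>X Y. X \<noteq> {}) \<phi>) \<longrightarrow> rooted C)
  \<and> ((\<forall>\<phi>\<in>T. clause_with E (\<lambda>X Y. card X = 1 \<or> Y = {}) \<phi>) \<longrightarrow> closed_bounded_unions C)
  \<and> ((\<forall>\<phi>\<in>T. clause_with E (\<lambda>X Y. finite Y \<and> card Y \<le> 1) \<phi>) \<longrightarrow> closed_nonempty_inters C)
  \<and> ((\<forall>\<phi>\<in>T. \<exists>X (J :: 'j set) Y. X \<subseteq> E \<and> (\<forall>j\<in>J. Y j \<subseteq> E) \<and> \<phi> = form_d X J Y)
        \<longrightarrow> closed_bounded_nonempty_inters C)
  \<and> ((\<forall>\<phi>\<in>T. clause_with E (\<lambda>X Y. finite X) \<phi>) \<longrightarrow> finite_conflict E C)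
  \<and> ((\<forall>\<phi>\<in>T. clause_with E (\<lambda>X Y. finite X \<and> card X \<le> 2) \<phi>) \<longrightarrow> binary_conflict E C)
  \<and> ((\<forall>\<phi>\<in>T. clause_with E (\<lambda>X Y. card X = 1 \<or> (finite X \<and> Y = {})) \<phi>)
        \<longrightarrow> closed_fin_consistent_unions C)
  \<and> ((\<forall>\<phi>\<in>T. clause_with E (\<lambda>X Y. card X = 1 \<or> (finite X \<and> card X \<le> 2 \<and> Y = {})) \<phi>)
        \<longrightarrow> closed_pw_consistent_unions C)
  \<and> ((\<forall>\<phi>\<in>T. \<exists>X (J :: 'k set) Y Z. X \<subseteq> E \<and> finite X \<and> (\<forall>j\<in>J. Y j \<subseteq> E)
          \<and> (\<forall>j\<in>J. \<forall>k\<in>J. j \<noteq> k \<longrightarrow> finite (Z j k) \<and> Z j k \<subseteq> Y j) \<and> \<phi> = form_i X J Y Z)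
        \<longrightarrow> closed_fin_consistent_nonempty_inters C)
  \<and> ((\<forall>\<phi>\<in>T. \<exists>X (J :: 'l set) Y e. X \<subseteq> E \<and> finite X \<and> card X \<le> 2 \<and> (\<forall>j\<in>J. Y j \<subseteq> E)
          \<and> (\<forall>j\<in>J. \<forall>k\<in>J. j \<noteq> k \<longrightarrow> e j k \<in> Y j) \<and> \<phi> = form_j X J Y e)
        \<longrightarrow> closed_pw_consistent_nonempty_inters C)"
  unfolding C_def
  by (intro conjI impI)
    (erule models_rooted models_closed_bounded_unions models_closed_nonempty_inters
      models_closed_bounded_nonempty_inters models_finite_conflict models_binary_conflict
      models_closed_fin_consistent_unions models_closed_pw_consistent_unions
      models_closed_fin_consistent_nonempty_inters models_closed_pw_consistent_nonempty_inters)+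

end
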